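(* Work in IST. Let $\varepsilon>0$ be infinitesimal, $f:\mathbb{R}\to\mathbb{R}$ $C^1$-limited, $h:\mathbb{R}^2\to\mathbb{R}$ $C^1$-limited and never vanishing, and $g:\mathbb{R}^2\to\mathbb{R}$ of class $C^1$ with $\inf g>0$ and $\inf g$ not infinitesimal. Consider $$\frac{dx}{dt}=h(x,y),\qquad \frac{dy}{dt}=\frac{1}{\varepsilon}g(x,y)\big(f(x)-y\big).$$ Let $(x_0,y_0)$ be a limited point not in the halo of the graph of $f$, and let $(x(t),y(t))$ be the solution with $(x(0),y(0))=(x_0,y_0)$. Then there exists $t^*>0$ such that: (1) $t^*\sim0$; (2) $x(t)\sim x_0$ for all $t\in[0,t^*]$; (3) $y(t^* )\sim f(x_0)$; (4) for every limited $t>t^*$, $y(t)\sim f(x(t))$.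
   Context: Nonstandard vocabulary (IST): infinitesimal = absolute value smaller than every standard positive real; limited = bounded in absolute value by some standard real; $a\sim b$ means $a-b$ infinitesimal; the halo of a set $E\subset\mathbb{R}^2$ is the set of points infinitely close to some point of $E$. A function is $C^1$-limited if it and its (partial) derivatives are bounded by a limited constant. *)

theory Defs
  imports "HOL-Analysis.Analysis"
begin

definition C1_bounded1 :: "(real \<Rightarrow> real) \<Rightarrow> real \<Rightarrow> bool" where
  "C1_bounded1 f K \<longleftrightarrow> (\<exists>f'. continuous_on UNIV f' \<and>
     (\<forall>u. (f has_real_derivative f' u) (at u)) \<and>
     (\<forall>u. \<bar>f u\<bar> \<le> K \<and> \<bar>f' u\<bar> \<le> K))"

definition C1_2 :: "(real \<times> real \<Rightarrow> real) \<Rightarrow> (real \<times> real \<Rightarrow> real) \<Rightarrow> (real \<times> real \<Rightarrow> real) \<Rightarrow> bool" where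
  "C1_2 h hx hy \<longleftrightarrow> continuous_on UNIV hx \<and> continuous_on UNIV hy \<and>
     (\<forall>p. (h has_derivative (\<lambda>(u, v). hx p * u + hy p * v)) (at p))"

definition C1_bounded2 :: "(real \<times> real \<Rightarrow> real) \<Rightarrow> real \<Rightarrow> bool" where
  "C1_bounded2 h K \<longleftrightarrow> (\<exists>hx hy. C1_2 h hx hy \<and>
     (\<forall>p. \<bar>h p\<bar> \<le> K \<and> \<bar>hx p\<bar> \<le> K \<and> \<bar>hy p\<bar> \<le> K))"

definition C1_fun2 :: "(real \<times> real \<Rightarrow> real) \<Rightarrow> bool" where
  "C1_fun2 g \<longleftrightarrow> (\<exists>gx gy. C1_2 g gx gy)"

end

theory Submission
  imports Defs
begin

text \<open>The deviation z = y - f(x) from the slow curve obeys the linear equation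
  z' = -(g/\<epsilon>) z - f'(x) h, whose damping rate is at least c/\<epsilon> and whose forcing is bounded
  by K^2. Comparison with an exponential barrier gives
  |z(t)| \<le> |z(0)| exp(-ct/\<epsilon>) + K^2 \<epsilon>/c. Hence after the transient time L\<epsilon>, with L large but
  independent of \<epsilon>, the fast variable stays within \<eta> of f(x), while the slow variable, moving
  with speed at most K, has travelled at most KL\<epsilon>.\<close>

lemma first_crossing_comparison:
  fixes u u' p p' :: "real \<Rightarrow> real"
  assumes du: "\<And>t. t \<ge> 0 \<Longrightarrow> (u has_real_derivative u' t) (at t within {0..})"
    and dp: "\<And>t. t \<ge> 0 \<Longrightarrow> (p has_real_derivative p' t) (at t within {0..})"
    and init: "u 0 < p 0"
    and cross: "\<And>t. t > 0 \<Longrightarrow> u t = p t \<Longrightarrow> u' t < p' t"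
    and t0: "t \<ge> 0"
  shows "u t < p t"
proof (rule ccontr)
  assume "\<not> u t < p t"
  define \<psi> where "\<psi> s = u s - p s" for s
  have d\<psi>: "(\<psi> has_real_derivative (u' s - p' s)) (at s within {0..})" if "s \<ge> 0" for s
    unfolding \<psi>_def using du[OF that] dp[OF that] by (intro derivative_intros)
  have cont: "continuous_on {0..b} \<psi>" for b
    using d\<psi> by (meson DERIV_continuous atLeastAtMost_iff continuous_at_imp_continuous_on
        continuous_on_eq_continuous_within continuous_within_subset atLeast_iff subsetI)
  define S where "S = {0..t} \<inter> \<psi> -` {0..}"
  have "closed S" unfolding S_def
    by (rule continuous_closed_preimage[OF cont]) auto
  moreover have "t \<in> S" unfolding S_def \<psi>_def using t0 \<open>\<not> u t < p t\<close> by auto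
  moreover have bdd: "bdd_below S" unfolding S_def by (rule bdd_belowI[of _ 0]) auto
  ultimately have t1S: "Inf S \<in> S" using closed_contains_Inf by blast
  define t1 where "t1 = Inf S"
  have below: "\<psi> s < 0" if "0 \<le> s" "s < t1" for s
    using cInf_lower[OF _ bdd, of s] that t1S unfolding S_def t1_def by force
  have "\<psi> 0 < 0" using init unfolding \<psi>_def by simp
  moreover have "0 \<le> t1" "0 \<le> \<psi> t1" using t1S unfolding S_def t1_def by auto
  ultimately have t1_pos: "t1 > 0" by (cases "t1 = 0") auto
  have "\<psi> t1 = 0"
  proof (rule ccontr)
    assume "\<psi> t1 \<noteq> 0"
    then have "\<psi> t1 > 0" using t1S unfolding S_def t1_def by auto
    then obtain s where "0 \<le> s" "s < t1" "\<psi> s = 0"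
      using IVT'[of \<psi> 0 0 t1, OF _ _ _ cont] \<open>\<psi> 0 < 0\<close> t1_pos by force
    then show False using below by force
  qed
  then have "u' t1 - p' t1 < 0" using cross t1_pos unfolding \<psi>_def by auto
  moreover have "(\<psi> has_real_derivative (u' t1 - p' t1)) (at t1 within {0<..})"
    using d\<psi>[of t1] t1_pos by (auto intro: DERIV_subset)
  then have "DERIV \<psi> t1 :> (u' t1 - p' t1)"
    using at_within_open[of t1 "{0<..}"] t1_pos by auto
  ultimately obtain e where e: "e > 0" "\<And>h. h > 0 \<Longrightarrow> h < e \<Longrightarrow> \<psi> t1 < \<psi> (t1 - h)"
    using DERIV_neg_dec_left by blast
  define h where "h = min (e/2) (t1/2)"
  have "\<psi> (t1 - h) > 0" using e \<open>\<psi> t1 = 0\<close> t1_pos unfolding h_def by auto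
  moreover have "\<psi> (t1 - h) < 0" by (rule below) (use e t1_pos in \<open>auto simp: h_def\<close>)
  ultimately show False by simp
qed

lemma linear_relaxation_upper_bound:
  fixes z G F :: "real \<Rightarrow> real" and a B M k t :: real
  assumes dz: "\<And>t. t \<ge> 0 \<Longrightarrow> (z has_real_derivative - G t * z t + F t) (at t within {0..})"
    and a: "0 < a" "\<And>t. t \<ge> 0 \<Longrightarrow> a \<le> G t"
    and F: "\<And>t. t \<ge> 0 \<Longrightarrow> F t \<le> B" and B: "0 \<le> B"
    and M: "0 \<le> M" "z 0 \<le> M" and k: "0 < k" and t: "0 \<le> t"
  shows "z t < M * exp (- a * t) + B / a + k"
proof (rule first_crossing_comparison[OF dz _ _ _ t])
  show "((\<lambda>t. M * exp (- a * t) + B / a + k) has_real_derivative - a * M * exp (- a * t))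
      (at t within {0..})" for t
    by (auto intro!: derivative_eq_intros)
  have "0 \<le> B / a" using B a by simp
  then show "z 0 < M * exp (- a * 0) + B / a + k" using M k by simp
  fix s :: real
  assume s: "s > 0" and crossing: "z s = M * exp (- a * s) + B / a + k"
  then have "z s \<ge> 0" using M B k a by (simp add: add_nonneg_nonneg)
  then have "a * z s \<le> G s * z s" using a s by (intro mult_right_mono) auto
  then have "- G s * z s + F s \<le> - a * z s + B" using F[of s] s by linarith
  also have "\<dots> = - a * M * exp (- a * s) - a * k" using crossing a by (simp add: field_simps)
  also have "\<dots> < - a * M * exp (- a * s)" using a k by simp
  finally show "- G s * z s + F s < - a * M * exp (- a * s)" .
qed

lemma linear_relaxation_abs_bound:
  fixes z G F :: "real \<Rightarrow> real" and a B t :: real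
  assumes dz: "\<And>t. t \<ge> 0 \<Longrightarrow> (z has_real_derivative - G t * z t + F t) (at t within {0..})"
    and a: "0 < a" "\<And>t. t \<ge> 0 \<Longrightarrow> a \<le> G t"
    and F: "\<And>t. t \<ge> 0 \<Longrightarrow> \<bar>F t\<bar> \<le> B" and t: "0 \<le> t"
  shows "\<bar>z t\<bar> \<le> \<bar>z 0\<bar> * exp (- a * t) + B / a"
proof (rule field_le_epsilon)
  fix k :: real
  assume k: "0 < k"
  have B: "0 \<le> B" using F[of 0] by simp
  have "z t < \<bar>z 0\<bar> * exp (- a * t) + B / a + k"
    by (rule linear_relaxation_upper_bound[OF dz a _ B _ _ k t]) (use F abs_le_D1 in auto)
  moreover have "- z t < \<bar>z 0\<bar> * exp (- a * t) + B / a + k"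
  proof (rule linear_relaxation_upper_bound[OF _ a _ B _ _ k t])
    show "((\<lambda>t. - z t) has_real_derivative - G s * - z s + - F s) (at s within {0..})"
      if "s \<ge> 0" for s
      using DERIV_minus[OF dz[OF that]] by simp
  qed (use F abs_le_D2 in auto)
  ultimately show "\<bar>z t\<bar> \<le> \<bar>z 0\<bar> * exp (- a * t) + B / a + k" by linarith
qed

lemma C1_bounded1_lipschitz:
  assumes "C1_bounded1 f K"
  shows "\<bar>f u - f v\<bar> \<le> K * \<bar>u - v\<bar>"
proof -
  obtain f' where "\<And>u. (f has_real_derivative f' u) (at u)" "\<And>u. \<bar>f' u\<bar> \<le> K"
    using assms unfolding C1_bounded1_def by blast
  then show ?thesis using field_differentiable_bound[of UNIV f f' K u v] by auto
qed

lemma drift_le_speed_bound: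
  fixes x x' :: "real \<Rightarrow> real"
  assumes "\<And>t. t \<ge> 0 \<Longrightarrow> (x has_real_derivative x' t) (at t within {0..})"
    and "\<And>t. t \<ge> 0 \<Longrightarrow> \<bar>x' t\<bar> \<le> K" and "0 \<le> t"
  shows "\<bar>x t - x 0\<bar> \<le> K * t"
  using field_differentiable_bound[of "{0..}" x x' K t 0] assms by auto

lemma fast_variable_relaxation:
  fixes f :: "real \<Rightarrow> real" and h g :: "real \<times> real \<Rightarrow> real" and x y :: "real \<Rightarrow> real"
  assumes \<epsilon>: "0 < \<epsilon>" and c: "0 < c" and f: "C1_bounded1 f K"
    and h: "\<And>p. \<bar>h p\<bar> \<le> K" and g: "\<And>p. c \<le> g p"
    and dx: "\<And>t. t \<ge> 0 \<Longrightarrow> (x has_real_derivative h (x t, y t)) (at t within {0..})"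
    and dy: "\<And>t. t \<ge> 0 \<Longrightarrow>
      (y has_real_derivative (1 / \<epsilon>) * g (x t, y t) * (f (x t) - y t)) (at t within {0..})"
    and t: "0 \<le> t"
  shows "\<bar>y t - f (x t)\<bar> \<le> \<bar>y 0 - f (x 0)\<bar> * exp (- (c / \<epsilon>) * t) + K\<^sup>2 * \<epsilon> / c"
proof -
  obtain f' where df: "\<And>u. (f has_real_derivative f' u) (at u)" and f': "\<And>u. \<bar>f' u\<bar> \<le> K"
    using f unfolding C1_bounded1_def by blast
  have "\<bar>y t - f (x t)\<bar> \<le> \<bar>y 0 - f (x 0)\<bar> * exp (- (c / \<epsilon>) * t) + K\<^sup>2 / (c / \<epsilon>)"
  proof (rule linear_relaxation_abs_bound[where G = "\<lambda>t. g (x t, y t) / \<epsilon>"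
        and F = "\<lambda>t. - f' (x t) * h (x t, y t)", OF _ _ _ _ t])
    show "((\<lambda>t. y t - f (x t)) has_real_derivative
        - (g (x s, y s) / \<epsilon>) * (y s - f (x s)) + - f' (x s) * h (x s, y s)) (at s within {0..})"
      if "s \<ge> 0" for s
      using DERIV_diff[OF dy[OF that] DERIV_chain2[OF df dx[OF that]]]
      by (rule DERIV_cong) (simp add: field_simps diff_divide_distrib)
    show "c / \<epsilon> \<le> g (x s, y s) / \<epsilon>" for s using g \<epsilon> by (simp add: divide_right_mono)
    show "\<bar>- f' (x s) * h (x s, y s)\<bar> \<le> K\<^sup>2" for s
      unfolding abs_minus_cancel abs_mult power2_eq_square
      using f' h abs_ge_zero order_trans by (intro mult_mono) blast+
  qed (use c \<epsilon> in auto)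
  then show ?thesis by simp
qed

lemma mult_exp_neg_le_divide:
  fixes M s :: real
  assumes "0 \<le> M" "0 < s"
  shows "M * exp (- s) \<le> M / s"
proof -
  have "s \<le> exp s" using exp_ge_add_one_self[of s] by linarith
  then have "M / exp s \<le> M / s" using assms by (intro divide_left_mono) auto
  then show ?thesis by (simp add: exp_minus field_simps)
qed

lemma transient_time_scale:
  fixes c \<eta> M K :: real
  assumes c: "0 < c" and \<eta>: "0 < \<eta>" and M: "0 \<le> M"
  obtains \<delta> L where "0 < \<delta>" "0 < L"
    and "\<And>\<epsilon>. 0 < \<epsilon> \<Longrightarrow> \<epsilon> < \<delta> \<Longrightarrow> \<epsilon> * L < \<eta> \<and> \<bar>K\<bar> * (\<epsilon> * L) \<le> \<eta> / 2 \<and>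
      K\<^sup>2 * (\<epsilon> * L) \<le> \<eta> / 2 \<and> M * exp (- c * L) + K\<^sup>2 * \<epsilon> / c \<le> \<eta> / 2"
proof -
  define L where "L = (4 * M + 1) / (c * \<eta>)"
  define N where "N = 1 + \<bar>K\<bar> + K\<^sup>2"
  define \<delta> where "\<delta> = min (\<eta> * c / (4 * N)) (\<eta> / (2 * L * N))"
  have L: "0 < L" unfolding L_def using c \<eta> M by simp
  have N: "1 \<le> N" "\<bar>K\<bar> \<le> N" "K\<^sup>2 \<le> N" unfolding N_def by auto
  show thesis
  proof (rule that[of \<delta> L, OF _ L])
    show "0 < \<delta>" unfolding \<delta>_def using c \<eta> L N by simp
    fix \<epsilon> :: real
    assume "0 < \<epsilon>" "\<epsilon> < \<delta>"
    then have \<epsilon>: "0 < \<epsilon>" "\<epsilon> < min (\<eta> * c / (4 * N)) (\<eta> / (2 * L * N))" unfolding \<delta>_def .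
    have "\<epsilon> * L * N < \<eta> / (2 * L * N) * L * N" using \<epsilon> L N by (intro mult_strict_right_mono) auto
    then have \<epsilon>LN: "\<epsilon> * L * N < \<eta> / 2" using L N by (simp add: field_simps)
    have "\<epsilon> * L \<le> \<epsilon> * L * N" "\<bar>K\<bar> * (\<epsilon> * L) \<le> \<epsilon> * L * N"
      "K\<^sup>2 * (\<epsilon> * L) \<le> \<epsilon> * L * N"
      using mult_left_mono[OF N(1), of "\<epsilon> * L"] mult_right_mono[OF N(2), of "\<epsilon> * L"]
        mult_right_mono[OF N(3), of "\<epsilon> * L"] \<epsilon> L by (simp_all add: mult.commute)
    moreover have "M * exp (- c * L) \<le> M / (c * L)"
      using mult_exp_neg_le_divide[OF M, of "c * L"] c L by simp
    moreover have "M / (c * L) = \<eta> / 4 * (4 * M / (4 * M + 1))"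
      unfolding L_def using c \<eta> M by (simp add: divide_simps)
    moreover have "\<eta> / 4 * (4 * M / (4 * M + 1)) \<le> \<eta> / 4"
      using \<eta> M by (intro mult_left_le) auto
    moreover have "K\<^sup>2 * \<epsilon> / c \<le> \<eta> / 4"
    proof -
      have "K\<^sup>2 * \<epsilon> \<le> N * (\<eta> * c / (4 * N))" using \<epsilon> N by (intro mult_mono) auto
      then show ?thesis using c N by (simp add: field_simps)
    qed
    ultimately show "\<epsilon> * L < \<eta> \<and> \<bar>K\<bar> * (\<epsilon> * L) \<le> \<eta> / 2 \<and>
        K\<^sup>2 * (\<epsilon> * L) \<le> \<eta> / 2 \<and> M * exp (- c * L) + K\<^sup>2 * \<epsilon> / c \<le> \<eta> / 2"
      using \<epsilon>LN \<eta> by linarith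
  qed
qed

lemma slow_fast_estimates:
  fixes f :: "real \<Rightarrow> real" and h g :: "real \<times> real \<Rightarrow> real" and x y :: "real \<Rightarrow> real"
  assumes \<epsilon>: "0 < \<epsilon>" and c: "0 < c" and f: "C1_bounded1 f K"
    and h: "\<And>p. \<bar>h p\<bar> \<le> K" and g: "\<And>p. c \<le> g p"
    and dx: "\<And>t. t \<ge> 0 \<Longrightarrow> (x has_real_derivative h (x t, y t)) (at t within {0..})"
    and dy: "\<And>t. t \<ge> 0 \<Longrightarrow>
      (y has_real_derivative (1 / \<epsilon>) * g (x t, y t) * (f (x t) - y t)) (at t within {0..})"
    and M: "\<bar>y 0 - f (x 0)\<bar> \<le> M" and L: "0 < L"
    and scale: "\<epsilon> * L < \<eta>" "\<bar>K\<bar> * (\<epsilon> * L) \<le> \<eta> / 2" "K\<^sup>2 * (\<epsilon> * L) \<le> \<eta> / 2"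
      "M * exp (- c * L) + K\<^sup>2 * \<epsilon> / c \<le> \<eta> / 2"
  shows "\<exists>ts>0. ts < \<eta> \<and> (\<forall>t\<in>{0..ts}. \<bar>x t - x 0\<bar> \<le> \<eta>) \<and> \<bar>y ts - f (x 0)\<bar> \<le> \<eta> \<and>
    (\<forall>t\<ge>ts. \<bar>y t - f (x t)\<bar> \<le> \<eta>)"
proof (intro exI[of _ "\<epsilon> * L"] conjI ballI allI impI)
  have K0: "0 \<le> K" using h[of 0] abs_ge_zero order_trans by blast
  then have K: "\<bar>K\<bar> = K" by simp
  have drift: "\<bar>x t - x 0\<bar> \<le> K * (\<epsilon> * L)" if "0 \<le> t" "t \<le> \<epsilon> * L" for t
    using drift_le_speed_bound[OF dx h that(1)] mult_left_mono[OF that(2) K0] by linarith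
  have near: "\<bar>y t - f (x t)\<bar> \<le> \<eta> / 2" if "\<epsilon> * L \<le> t" for t
  proof -
    have "c * L \<le> c / \<epsilon> * t"
      using mult_left_mono[OF that, of "c / \<epsilon>"] \<epsilon> c by simp
    then have "exp (- (c / \<epsilon>) * t) \<le> exp (- c * L)" by simp
    then have "\<bar>y 0 - f (x 0)\<bar> * exp (- (c / \<epsilon>) * t) \<le> M * exp (- c * L)"
      using M by (intro mult_mono) auto
    moreover have "0 \<le> t" using that \<epsilon> L by (meson less_imp_le mult_pos_pos order_trans)
    then have "\<bar>y t - f (x t)\<bar> \<le> \<bar>y 0 - f (x 0)\<bar> * exp (- (c / \<epsilon>) * t) + K\<^sup>2 * \<epsilon> / c"
      by (intro fast_variable_relaxation[where h = h and g = g] \<epsilon> c f h g dx dy)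
    ultimately show ?thesis using scale(4) by linarith
  qed
  show "0 < \<epsilon> * L" "\<epsilon> * L < \<eta>" using \<epsilon> L scale(1) by simp_all
  then show "\<bar>y t - f (x t)\<bar> \<le> \<eta>" if "\<epsilon> * L \<le> t" for t using near[OF that] by linarith
  show "\<bar>x t - x 0\<bar> \<le> \<eta>" if "t \<in> {0..\<epsilon> * L}" for t
    using drift[of t] that scale(2) K \<epsilon> L by auto
  have "\<bar>f (x (\<epsilon> * L)) - f (x 0)\<bar> \<le> K * (K * (\<epsilon> * L))"
    using C1_bounded1_lipschitz[OF f] mult_left_mono[OF drift K0] \<epsilon> L
    by (meson less_imp_le mult_pos_pos order_refl order_trans)
  then show "\<bar>y (\<epsilon> * L) - f (x 0)\<bar> \<le> \<eta>"
    using near[of "\<epsilon> * L"] scale(3)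
      abs_triangle_ineq[of "y (\<epsilon> * L) - f (x (\<epsilon> * L))" "f (x (\<epsilon> * L)) - f (x 0)"]
    by (simp add: power2_eq_square mult.assoc)
qed

theorem mainTheorem9:
  fixes K c R d \<eta> T :: real
  assumes "c > 0" and "d > 0" and "\<eta> > 0"
  shows "\<exists>\<delta>>0. \<forall>(\<epsilon>::real) (f::real \<Rightarrow> real) (h::real \<times> real \<Rightarrow> real)
      (g::real \<times> real \<Rightarrow> real) (x0::real) (y0::real) (x::real \<Rightarrow> real) (y::real \<Rightarrow> real).
      0 < \<epsilon> \<and> \<epsilon> < \<delta> \<and>
      C1_bounded1 f K \<and> C1_bounded2 h K \<and> (\<forall>p. h p \<noteq> 0) \<and>
      C1_fun2 g \<and> (\<forall>p. c \<le> g p) \<and>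
      \<bar>x0\<bar> \<le> R \<and> \<bar>y0\<bar> \<le> R \<and> (\<forall>u. d \<le> dist (x0, y0) (u, f u)) \<and>
      x 0 = x0 \<and> y 0 = y0 \<and>
      (\<forall>t\<ge>0. (x has_real_derivative h (x t, y t)) (at t within {0..}) \<and>
              (y has_real_derivative (1 / \<epsilon>) * g (x t, y t) * (f (x t) - y t)) (at t within {0..}))
      \<longrightarrow> (\<exists>ts>0. ts < \<eta> \<and>
             (\<forall>t\<in>{0..ts}. \<bar>x t - x0\<bar> \<le> \<eta>) \<and>
             \<bar>y ts - f x0\<bar> \<le> \<eta> \<and>
             (\<forall>t. ts < t \<and> t \<le> T \<longrightarrow> \<bar>y t - f (x t)\<bar> \<le> \<eta>))"
proof -
  obtain \<delta> L where \<delta>: "0 < \<delta>" and L: "0 < L"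
    and scale: "\<And>\<epsilon>. 0 < \<epsilon> \<Longrightarrow> \<epsilon> < \<delta> \<Longrightarrow> \<epsilon> * L < \<eta> \<and> \<bar>K\<bar> * (\<epsilon> * L) \<le> \<eta> / 2 \<and>
      K\<^sup>2 * (\<epsilon> * L) \<le> \<eta> / 2 \<and> (\<bar>R\<bar> + \<bar>K\<bar>) * exp (- c * L) + K\<^sup>2 * \<epsilon> / c \<le> \<eta> / 2"
    using transient_time_scale[OF \<open>0 < c\<close> \<open>0 < \<eta>\<close>, of "\<bar>R\<bar> + \<bar>K\<bar>" K] by auto
  show ?thesis
  proof (rule exI[of _ \<delta>], intro conjI[OF \<delta>] allI impI, elim conjE)
    fix \<epsilon> f h g x0 y0 and x y :: "real \<Rightarrow> real"
    assume \<epsilon>: "0 < \<epsilon>" "\<epsilon> < \<delta>" and f: "C1_bounded1 f K" and h: "C1_bounded2 h K"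
      and "\<forall>p. h p \<noteq> 0" "C1_fun2 g" and g: "\<forall>p. c \<le> g p" and "\<bar>x0\<bar> \<le> R"
      and y0: "\<bar>y0\<bar> \<le> R" and "\<forall>u. d \<le> dist (x0, y0) (u, f u)" and init: "x 0 = x0" "y 0 = y0"
      and ode: "\<forall>t\<ge>0. (x has_real_derivative h (x t, y t)) (at t within {0..}) \<and>
        (y has_real_derivative (1 / \<epsilon>) * g (x t, y t) * (f (x t) - y t)) (at t within {0..})"
    have "\<bar>f x0\<bar> \<le> K" using f unfolding C1_bounded1_def by blast
    then have M: "\<bar>y 0 - f (x 0)\<bar> \<le> \<bar>R\<bar> + \<bar>K\<bar>" using init y0 by auto
    have hK: "\<And>p. \<bar>h p\<bar> \<le> K" using h unfolding C1_bounded2_def by blast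
    have gc: "\<And>p. c \<le> g p" using g by blast
    have dx: "\<And>t. t \<ge> 0 \<Longrightarrow> (x has_real_derivative h (x t, y t)) (at t within {0..})"
      and dy: "\<And>t. t \<ge> 0 \<Longrightarrow>
        (y has_real_derivative (1 / \<epsilon>) * g (x t, y t) * (f (x t) - y t)) (at t within {0..})"
      using ode by simp_all
    have "\<exists>ts>0. ts < \<eta> \<and> (\<forall>t\<in>{0..ts}. \<bar>x t - x 0\<bar> \<le> \<eta>) \<and>
        \<bar>y ts - f (x 0)\<bar> \<le> \<eta> \<and> (\<forall>t\<ge>ts. \<bar>y t - f (x t)\<bar> \<le> \<eta>)"
      using scale[OF \<epsilon>] slow_fast_estimates[where h = h and g = g, OF \<epsilon>(1) \<open>0 < c\<close> f hK gc dx dy M L]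
      by blast
    then show "\<exists>ts>0. ts < \<eta> \<and> (\<forall>t\<in>{0..ts}. \<bar>x t - x0\<bar> \<le> \<eta>) \<and> \<bar>y ts - f x0\<bar> \<le> \<eta> \<and>
        (\<forall>t. ts < t \<and> t \<le> T \<longrightarrow> \<bar>y t - f (x t)\<bar> \<le> \<eta>)"
      unfolding init by (meson less_imp_le)
  qed
qed

end
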